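(* Let $q$ be a prime power and let $X \subset \mathbb{P}^2$ be the Hermitian curve over $\mathbb{F}_{q^2}$, the projective closure of the affine curve $x^{q+1} = y^q + y$. Let $P_0$ be its unique point at infinity, let $\rho$ be an integer with $0 \le \rho \le q^2-q-2$ and $G = \rho P_0$, let $P_1,\dots,P_n$, $n = q^3$, be the affine $\mathbb{F}_{q^2}$-rational points of $X$, and $D = P_1+\cdots+P_n$. Let $d$ be the minimum distance of the Hermitian code $C(D,G)^*$, and assume that $L(G) = H^0(\mathbb{P}^2, \mathcal{O}_{\mathbb{P}^2}(d-2))$, i.e. $L(G)$ equals the space of restrictions to $X$ of polynomials in $x,y$ of degree at most $d-2$. Let $a$ be an integer with $0 \le a \le d-3$ and let $\{P_{i_1},\ldots,P_{i_{d+a}}\}$ be the points $P_i$ with nonzero coordinate in a codeword of $C(D,G)^*$ of weight $d+a$. Then at least $d-1$ of the points $P_{i_1},\ldots,P_{i_{d+a}}$ are collinear.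
   Context: $L(G)$ is the Riemann–Roch space of rational functions $f$ on $X$ with $f=0$ or $\mathrm{div}(f)+G \ge 0$. $C(D,G) = \{(f(P_1),\dots,f(P_n)) : f \in L(G)\}$ and the Hermitian code $C(D,G)^*$ is its dual: the set of $c \in \mathbb{F}_{q^2}^n$ with $\sum_i c_i f(P_i) = 0$ for all $f \in L(G)$. Weight = number of nonzero coordinates; minimum distance = minimum weight of a nonzero codeword. *)

theory Defs
  imports "HOL-Computational_Algebra.Primes"
begin

text \<open>Affine F-rational points of the Hermitian curve x^(q+1) = y^q + y
  (F is the ambient finite field, of order q^2 in the theorem).\<close>
definition herm_pts :: "nat \<Rightarrow> ('a::field \<times> 'a) set" where
  "herm_pts q = {(x, y). x ^ (q + 1) = y ^ q + y}"

text \<open>Vectors in F^n, n = number of affine points, indexed by the points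
  themselves; a vector is a function vanishing off the point set.\<close>
definition herm_word :: "nat \<Rightarrow> ('a::field \<times> 'a \<Rightarrow> 'a) \<Rightarrow> bool" where
  "herm_word q v \<longleftrightarrow> (\<forall>P. P \<notin> herm_pts q \<longrightarrow> v P = 0)"

text \<open>The code C(D, rho P0): evaluation vectors of L(rho P0). L(rho P0) has
  the standard basis x^i y^j with 0 <= i <= q and q i + (q+1) j <= rho
  (x, y have pole orders q, q+1 at P0).\<close>
definition herm_LG_code :: "nat \<Rightarrow> nat \<Rightarrow> ('a::field \<times> 'a \<Rightarrow> 'a) set" where
  "herm_LG_code q \<rho> = {v. herm_word q v \<and>
     (\<exists>c :: nat \<Rightarrow> nat \<Rightarrow> 'a. \<forall>x y. (x, y) \<in> herm_pts q \<longrightarrow>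
        v (x, y) = (\<Sum>i\<le>q. \<Sum>j\<le>\<rho>.
           if q * i + (q + 1) * j \<le> \<rho> then c i j * x ^ i * y ^ j else 0))}"

text \<open>Evaluation vectors of restrictions to X of polynomials in x, y of total
  degree at most m (= H^0(P^2, O(m)) restricted to the affine points).\<close>
definition herm_poly_code :: "nat \<Rightarrow> nat \<Rightarrow> ('a::field \<times> 'a \<Rightarrow> 'a) set" where
  "herm_poly_code q m = {v. herm_word q v \<and>
     (\<exists>c :: nat \<Rightarrow> nat \<Rightarrow> 'a. \<forall>x y. (x, y) \<in> herm_pts q \<longrightarrow>
        v (x, y) = (\<Sum>i\<le>m. \<Sum>j\<le>m - i. c i j * x ^ i * y ^ j))}"

definition herm_dual_code :: "nat \<Rightarrow> nat \<Rightarrow> ('a::field \<times> 'a \<Rightarrow> 'a) set" where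
  "herm_dual_code q \<rho> = {c. herm_word q c \<and>
     (\<forall>v \<in> herm_LG_code q \<rho>. (\<Sum>P \<in> herm_pts q. c P * v P) = 0)}"

definition herm_weight :: "nat \<Rightarrow> ('a::field \<times> 'a \<Rightarrow> 'a) \<Rightarrow> nat" where
  "herm_weight q c = card {P \<in> herm_pts q. c P \<noteq> 0}"

definition herm_min_dist :: "nat \<Rightarrow> nat \<Rightarrow> 'a::field itself \<Rightarrow> nat" where
  "herm_min_dist q \<rho> _ = Min {herm_weight q c | c :: 'a \<times> 'a \<Rightarrow> 'a.
       c \<in> herm_dual_code q \<rho> \<and> c \<noteq> (\<lambda>_. 0)}"

definition collinear_pts :: "('a::field \<times> 'a) set \<Rightarrow> bool" where
  "collinear_pts S \<longleftrightarrow> (\<exists>a b e. (a, b) \<noteq> (0, 0) \<and>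
     (\<forall>(x, y) \<in> S. a * x + b * y + e = 0))"

end

theory Submission
  imports Defs
begin

text \<open>Suppose no \<open>d - 1 = m + 1\<close> points of the support of \<open>c\<close> are collinear, and pick a
  support point \<open>P\<close>. The remaining \<open>d + a - 1 \<le> 2m\<close> support points meet every line
  through \<open>P\<close> in at most \<open>m\<close> points, and this suffices to cover them by \<open>m\<close> lines
  avoiding \<open>P\<close>: at each step one removes a pair of points not collinear with \<open>P\<close> chosen
  so that every line through \<open>P\<close> that is still full loses a point. The product of the
  \<open>m\<close> linear forms is a polynomial of degree \<open>m = d - 2\<close>, hence by hypothesis an element
  of \<open>L(G)\<close>; orthogonality to \<open>c\<close> then forces \<open>c P = 0\<close>, a contradiction.\<close>

definition poly_fun :: "nat \<Rightarrow> ('a::comm_semiring_1 \<times> 'a \<Rightarrow> 'a) \<Rightarrow> bool" where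
  "poly_fun m f \<longleftrightarrow> (\<exists>c :: nat \<Rightarrow> nat \<Rightarrow> 'a. \<forall>x y.
      f (x, y) = (\<Sum>i\<le>m. \<Sum>j\<le>m - i. c i j * x ^ i * y ^ j))"

lemma poly_fun_const: "poly_fun 0 (\<lambda>_. k)"
  unfolding poly_fun_def by (rule exI[of _ "\<lambda>_ _. k"]) simp

lemma poly_fun_add:
  assumes "poly_fun m f" "poly_fun m g"
  shows "poly_fun m (\<lambda>p. f p + g p)"
proof -
  obtain c where c: "\<And>x y. f (x, y) = (\<Sum>i\<le>m. \<Sum>j\<le>m - i. c i j * x ^ i * y ^ j)"
    using assms(1) unfolding poly_fun_def by blast
  obtain c' where c': "\<And>x y. g (x, y) = (\<Sum>i\<le>m. \<Sum>j\<le>m - i. c' i j * x ^ i * y ^ j)"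
    using assms(2) unfolding poly_fun_def by blast
  show ?thesis unfolding poly_fun_def
    by (rule exI[of _ "\<lambda>i j. c i j + c' i j"]) (simp add: c c' distrib_right sum.distrib)
qed

lemma poly_fun_cmult:
  assumes "poly_fun m f"
  shows "poly_fun m (\<lambda>p. k * f p)"
proof -
  obtain c where c: "\<And>x y. f (x, y) = (\<Sum>i\<le>m. \<Sum>j\<le>m - i. c i j * x ^ i * y ^ j)"
    using assms unfolding poly_fun_def by blast
  show ?thesis unfolding poly_fun_def
    by (rule exI[of _ "\<lambda>i j. k * c i j"]) (simp add: c sum_distrib_left mult.assoc)
qed

lemma poly_fun_Suc:
  assumes "poly_fun m f"
  shows "poly_fun (Suc m) f"
proof -
  obtain c where c: "\<And>x y. f (x, y) = (\<Sum>i\<le>m. \<Sum>j\<le>m - i. c i j * x ^ i * y ^ j)"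
    using assms unfolding poly_fun_def by blast
  define c' where "c' i j = (if i + j \<le> m then c i j else 0)" for i j
  have "(\<Sum>i\<le>Suc m. \<Sum>j\<le>Suc m - i. c' i j * x ^ i * y ^ j)
      = (\<Sum>i\<le>m. \<Sum>j\<le>Suc (m - i). c' i j * x ^ i * y ^ j)" for x y
    by (auto simp: c'_def Suc_diff_le intro!: sum.cong)
  also have "\<dots> x y = (\<Sum>i\<le>m. \<Sum>j\<le>m - i. c i j * x ^ i * y ^ j)" for x y
    by (auto simp: c'_def intro!: sum.cong)
  finally show ?thesis
    unfolding poly_fun_def c by (intro exI[of _ c']) simp
qed

lemma poly_fun_mult_fst:
  assumes "poly_fun m f"
  shows "poly_fun (Suc m) (\<lambda>p. fst p * f p)"
proof -
  obtain c where c: "\<And>x y. f (x, y) = (\<Sum>i\<le>m. \<Sum>j\<le>m - i. c i j * x ^ i * y ^ j)"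
    using assms unfolding poly_fun_def by blast
  define c' where "c' i j = (if i = 0 then 0 else c (i - 1) j)" for i j
  have "(\<Sum>i\<le>Suc m. \<Sum>j\<le>Suc m - i. c' i j * x ^ i * y ^ j)
      = (\<Sum>i\<le>m. \<Sum>j\<le>m - i. x * (c i j * x ^ i * y ^ j))" for x y
    by (subst sum.atMost_Suc_shift) (simp add: c'_def mult_ac)
  then show ?thesis
    unfolding poly_fun_def by (intro exI[of _ c']) (simp add: c sum_distrib_left)
qed

lemma poly_fun_mult_snd:
  assumes "poly_fun m f"
  shows "poly_fun (Suc m) (\<lambda>p. snd p * f p)"
proof -
  obtain c where c: "\<And>x y. f (x, y) = (\<Sum>i\<le>m. \<Sum>j\<le>m - i. c i j * x ^ i * y ^ j)"
    using assms unfolding poly_fun_def by blast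
  define c' where "c' i j = (if j = 0 then 0 else c i (j - 1))" for i j
  have "(\<Sum>j\<le>Suc (m - i). c' i j * x ^ i * y ^ j) = (\<Sum>j\<le>m - i. y * (c i j * x ^ i * y ^ j))"
    for i x y
    by (subst sum.atMost_Suc_shift) (simp add: c'_def mult_ac)
  then have "(\<Sum>i\<le>Suc m. \<Sum>j\<le>Suc m - i. c' i j * x ^ i * y ^ j)
      = (\<Sum>i\<le>m. \<Sum>j\<le>m - i. y * (c i j * x ^ i * y ^ j))" for x y
    by (auto simp: c'_def Suc_diff_le intro!: sum.cong)
  then show ?thesis
    unfolding poly_fun_def by (intro exI[of _ c']) (simp add: c sum_distrib_left)
qed

lemma poly_fun_mult_affine:
  assumes "poly_fun m f"
  shows "poly_fun (Suc m) (\<lambda>p. (\<alpha> * fst p + \<beta> * snd p + \<gamma>) * f p)"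
proof -
  have "poly_fun (Suc m) (\<lambda>p. \<alpha> * (fst p * f p) + \<beta> * (snd p * f p) + \<gamma> * f p)"
    using assms
    by (intro poly_fun_add poly_fun_cmult poly_fun_mult_fst poly_fun_mult_snd poly_fun_Suc)
  then show ?thesis
    by (simp add: algebra_simps)
qed

definition collinear3 :: "'a::comm_ring \<times> 'a \<Rightarrow> 'a \<times> 'a \<Rightarrow> 'a \<times> 'a \<Rightarrow> bool" where
  "collinear3 P Q R \<longleftrightarrow>
     (fst Q - fst P) * (snd R - snd P) = (snd Q - snd P) * (fst R - fst P)"

lemma collinear3_refl: "collinear3 P Q Q"
  by (simp add: collinear3_def mult.commute)

lemma collinear3_swap: "collinear3 P Q R \<Longrightarrow> collinear3 P R Q"
  by (simp add: collinear3_def mult.commute)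

lemma collinear3_trans:
  fixes P Q R Y :: "'a::idom \<times> 'a"
  assumes "Y \<noteq> P" "collinear3 P Y Q" "collinear3 P Y R"
  shows "collinear3 P Q R"
proof -
  define u1 u2 v1 v2 w1 w2
    where "u1 = fst Y - fst P" "u2 = snd Y - snd P" "v1 = fst Q - fst P"
      "v2 = snd Q - snd P" "w1 = fst R - fst P" "w2 = snd R - snd P"
  have "u1 * v2 = u2 * v1" "u1 * w2 = u2 * w1"
    using assms(2,3) by (simp_all add: collinear3_def u1_u2_v1_v2_w1_w2_def)
  \<comment> \<open>both coordinates of \<open>Y - P\<close> annihilate the determinant of \<open>Q - P\<close> and \<open>R - P\<close>\<close>
  moreover have "u1 * (v1 * w2 - v2 * w1) = v1 * (u1 * w2 - u2 * w1) - w1 * (u1 * v2 - u2 * v1)"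
    and "u2 * (v1 * w2 - v2 * w1) = v2 * (u1 * w2 - u2 * w1) - w2 * (u1 * v2 - u2 * v1)"
    by (simp_all add: algebra_simps)
  moreover have "u1 \<noteq> 0 \<or> u2 \<noteq> 0"
    using assms(1) by (auto simp: u1_u2_v1_v2_w1_w2_def prod_eq_iff)
  ultimately have "v1 * w2 = v2 * w1"
    by auto
  then show ?thesis
    by (simp add: collinear3_def u1_u2_v1_v2_w1_w2_def)
qed

definition pts_on_line :: "'a::comm_ring \<times> 'a \<Rightarrow> 'a \<times> 'a \<Rightarrow> ('a \<times> 'a) set \<Rightarrow> ('a \<times> 'a) set"
  where "pts_on_line P Q T = {R \<in> T. collinear3 P Q R}"

lemma pts_on_line_disjoint:
  fixes P :: "'a::idom \<times> 'a"
  assumes "P \<notin> T" "\<not> collinear3 P X Y"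
  shows "pts_on_line P X T \<inter> pts_on_line P Y T = {}"
proof -
  have "collinear3 P X Y" if "Z \<in> T" "collinear3 P X Z" "collinear3 P Y Z" for Z
    using collinear3_trans[of Z P X Y] collinear3_swap that assms(1) by blast
  then show ?thesis
    using assms(2) unfolding pts_on_line_def by blast
qed

lemma collinear_pts_on_line:
  fixes P Q :: "'a::field \<times> 'a"
  assumes "Q \<noteq> P"
  shows "collinear_pts (insert P (pts_on_line P Q T))"
proof -
  define a b where "a = snd Q - snd P" "b = fst P - fst Q"
  have "a * x + b * y + - (a * fst P + b * snd P) = 0"
    if "(x, y) \<in> insert P (pts_on_line P Q T)" for x y
  proof -
    have "a * x + b * y + - (a * fst P + b * snd P)
        = (snd Q - snd P) * (x - fst P) - (fst Q - fst P) * (y - snd P)"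
      unfolding a_b_def by (simp add: algebra_simps)
    moreover have "(x, y) = P \<or> collinear3 P Q (x, y)"
      using that by (auto simp: pts_on_line_def)
    ultimately show ?thesis
      by (auto simp: collinear3_def)
  qed
  moreover have "(a, b) \<noteq> (0, 0)"
    using assms by (auto simp: a_b_def prod_eq_iff)
  ultimately show ?thesis
    unfolding collinear_pts_def by (intro exI[of _ a] exI[of _ b] exI) auto
qed

lemma affine_form_through_point:
  fixes P Q :: "'a::comm_ring_1 \<times> 'a"
  assumes "Q \<noteq> P"
  obtains \<alpha> \<beta> \<gamma> where "\<alpha> * fst Q + \<beta> * snd Q + \<gamma> = 0" "\<alpha> * fst P + \<beta> * snd P + \<gamma> \<noteq> 0"
proof (cases "fst Q = fst P")
  case True
  then have "snd Q \<noteq> snd P"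
    using assms by (simp add: prod_eq_iff)
  then show ?thesis
    using that[of 0 1 "- snd Q"] by simp
next
  case False
  then show ?thesis
    using that[of 1 0 "- fst Q"] by simp
qed

lemma affine_form_through_two_points:
  fixes P Q R :: "'a::comm_ring_1 \<times> 'a"
  assumes "\<not> collinear3 P Q R"
  obtains \<alpha> \<beta> \<gamma> where "\<alpha> * fst Q + \<beta> * snd Q + \<gamma> = 0" "\<alpha> * fst R + \<beta> * snd R + \<gamma> = 0"
    "\<alpha> * fst P + \<beta> * snd P + \<gamma> \<noteq> 0"
proof -
  define \<alpha> \<beta> where "\<alpha> = snd R - snd Q" "\<beta> = fst Q - fst R"
  define \<gamma> where "\<gamma> = - (\<alpha> * fst Q + \<beta> * snd Q)"
  have "\<alpha> * fst Q + \<beta> * snd Q + \<gamma> = 0"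
    by (simp add: \<gamma>_def)
  moreover have "\<alpha> * fst R + \<beta> * snd R + \<gamma> = 0"
    by (simp add: \<alpha>_\<beta>_def \<gamma>_def algebra_simps)
  moreover have "\<alpha> * fst P + \<beta> * snd P + \<gamma> =
      (snd Q - snd P) * (fst R - fst P) - (fst Q - fst P) * (snd R - snd P)"
    by (simp add: \<alpha>_\<beta>_def \<gamma>_def algebra_simps)
  ultimately show ?thesis
    using assms that by (simp add: collinear3_def)
qed

lemma card_pts_on_three_lines:
  fixes P :: "'a::idom \<times> 'a"
  assumes "finite T" "P \<notin> T"
    and "\<not> collinear3 P Q R" "\<not> collinear3 P Q X" "\<not> collinear3 P R X"
  shows "card (pts_on_line P Q T) + card (pts_on_line P R T) + card (pts_on_line P X T) \<le> card T"
proof -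
  have fin: "finite (pts_on_line P Y T)" for Y
    using assms(1) by (simp add: pts_on_line_def)
  have "card (pts_on_line P Q T \<union> pts_on_line P R T \<union> pts_on_line P X T)
      = card (pts_on_line P Q T) + card (pts_on_line P R T) + card (pts_on_line P X T)"
    using pts_on_line_disjoint[OF assms(2)] assms(3-5) fin
    by (simp add: card_Un_disjoint Int_Un_distrib2)
  moreover have "card (pts_on_line P Q T \<union> pts_on_line P R T \<union> pts_on_line P X T) \<le> card T"
    using assms(1) by (intro card_mono) (auto simp: pts_on_line_def)
  ultimately show ?thesis
    by simp
qed

lemma card_pts_on_line_Diff_le:
  assumes "finite T" "card (pts_on_line P X T) \<le> Suc m"
    and "card (pts_on_line P X T) = Suc m \<Longrightarrow> pts_on_line P X T \<inter> A \<noteq> {}"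
  shows "card (pts_on_line P X (T - A)) \<le> m"
proof -
  have fin: "finite (pts_on_line P X T)"
    using assms(1) by (simp add: pts_on_line_def)
  have eq: "pts_on_line P X (T - A) = pts_on_line P X T - A"
    by (auto simp: pts_on_line_def)
  show ?thesis
  proof (cases "card (pts_on_line P X T) = Suc m")
    case True
    then obtain Y where "Y \<in> pts_on_line P X T" "Y \<in> A"
      using assms(3) by blast
    then have "card (pts_on_line P X T - A) \<le> card (pts_on_line P X T - {Y})"
      using fin by (intro card_mono) auto
    with True \<open>Y \<in> pts_on_line P X T\<close> fin show ?thesis
      by (simp add: eq)
  next
    case False
    moreover have "card (pts_on_line P X T - A) \<le> card (pts_on_line P X T)"
      using fin by (intro card_mono) auto
    ultimately show ?thesis
      using assms(2) by (simp add: eq)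
  qed
qed

text \<open>Call a line through \<open>P\<close> full if it carries \<open>m + 1\<close> points of \<open>T\<close>. Since
  \<open>|T| \<le> 2(m + 1)\<close>, at most two lines are full, so one pair of points hits all of them.\<close>

lemma removal_pair_exists:
  fixes P :: "'a::idom \<times> 'a"
  assumes "finite T" "P \<notin> T" "T \<noteq> {}" "card T \<le> 2 * Suc m"
    and lines: "\<forall>X\<in>T. card (pts_on_line P X T) \<le> Suc m"
    and not_on_one_line: "\<forall>X\<in>T. pts_on_line P X T \<noteq> T"
  obtains Q R where "Q \<in> T" "R \<in> T" "\<not> collinear3 P Q R"
    "\<forall>X\<in>T - {Q, R}. card (pts_on_line P X (T - {Q, R})) \<le> m"
proof -
  define full where "full X \<longleftrightarrow> card (pts_on_line P X T) = Suc m" for X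
  obtain Q where Q: "Q \<in> T" "(\<exists>X\<in>T. full X) \<longrightarrow> full Q"
    using assms(3) by blast
  obtain R where R: "R \<in> T" "\<not> collinear3 P Q R"
      "(\<exists>X\<in>T. \<not> collinear3 P Q X \<and> full X) \<longrightarrow> full R"
    using not_on_one_line Q(1) unfolding pts_on_line_def by blast
  have "pts_on_line P X T \<inter> {Q, R} \<noteq> {}" if X: "X \<in> T" "full X" for X
  proof (rule ccontr)
    assume "\<not> ?thesis"
    then have "\<not> collinear3 P Q X" "\<not> collinear3 P R X"
      using Q(1) R(1) collinear3_swap unfolding pts_on_line_def by blast+
    moreover have "full Q" "full R"
      using Q R X \<open>\<not> collinear3 P Q X\<close> by blast+
    ultimately have "3 * Suc m \<le> card T"
      using card_pts_on_three_lines[OF assms(1,2) R(2), of X] \<open>full X\<close> by (simp add: full_def)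
    then show False
      using assms(4) by simp
  qed
  then have "\<forall>X\<in>T - {Q, R}. card (pts_on_line P X (T - {Q, R})) \<le> m"
    using card_pts_on_line_Diff_le[OF assms(1)] lines unfolding full_def by blast
  then show ?thesis
    using that Q(1) R(1,2) by blast
qed

lemma poly_fun_vanishing_avoiding_point:
  fixes P :: "'a::idom \<times> 'a"
  assumes "finite T" "P \<notin> T" "card T \<le> 2 * m"
    and "\<forall>Q\<in>T. card (pts_on_line P Q T) \<le> m"
  shows "\<exists>f. poly_fun m f \<and> (\<forall>Q\<in>T. f Q = 0) \<and> f P \<noteq> 0"
  using assms
proof (induction m arbitrary: T)
  case 0
  then show ?case
    using poly_fun_const[of "1::'a"] by auto
next
  case (Suc m)
  have extend: "\<exists>f. poly_fun (Suc m) f \<and> (\<forall>Q\<in>T. f Q = 0) \<and> f P \<noteq> 0"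
    if sub: "T' \<subseteq> T" "card T' \<le> 2 * m" "\<forall>Q\<in>T'. card (pts_on_line P Q T') \<le> m"
      and form: "\<forall>Q\<in>T - T'. \<alpha> * fst Q + \<beta> * snd Q + \<gamma> = 0" "\<alpha> * fst P + \<beta> * snd P + \<gamma> \<noteq> 0"
    for T' \<alpha> \<beta> \<gamma>
  proof -
    have "finite T'" "P \<notin> T'"
      using sub(1) Suc.prems(1,2) finite_subset by blast+
    then obtain f where "poly_fun m f" "\<forall>Q\<in>T'. f Q = 0" "f P \<noteq> 0"
      using Suc.IH[of T'] sub(2,3) by blast
    then show ?thesis
      using form poly_fun_mult_affine
      by (intro exI[of _ "\<lambda>p. (\<alpha> * fst p + \<beta> * snd p + \<gamma>) * f p"]) auto
  qed
  consider "T = {}" | Q where "Q \<in> T" "pts_on_line P Q T = T"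
    | "T \<noteq> {}" "\<forall>Q\<in>T. pts_on_line P Q T \<noteq> T"
    by blast
  then show ?case
  proof cases
    case 1
    then show ?thesis
      by (intro extend[of "{}" 0 0 1]) auto
  next
    case 2
    then have "card T \<le> Suc m"
      using Suc.prems(4) by metis
    then have "card (T - {Q}) \<le> m"
      using 2(1) Suc.prems(1) by simp
    moreover have "card (pts_on_line P X (T - {Q})) \<le> m" for X
    proof -
      have "card (pts_on_line P X (T - {Q})) \<le> card (T - {Q})"
        using Suc.prems(1) by (intro card_mono) (auto simp: pts_on_line_def)
      with \<open>card (T - {Q}) \<le> m\<close> show ?thesis
        by linarith
    qed
    moreover obtain \<alpha> \<beta> \<gamma> where "\<alpha> * fst Q + \<beta> * snd Q + \<gamma> = 0" "\<alpha> * fst P + \<beta> * snd P + \<gamma> \<noteq> 0"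
      using affine_form_through_point 2 Suc.prems(2) by metis
    ultimately show ?thesis
      by (intro extend[of "T - {Q}" \<alpha> \<beta> \<gamma>]) auto
  next
    case 3
    obtain Q R where QR: "Q \<in> T" "R \<in> T" "\<not> collinear3 P Q R"
        "\<forall>X\<in>T - {Q, R}. card (pts_on_line P X (T - {Q, R})) \<le> m"
      using removal_pair_exists[OF Suc.prems(1,2) 3(1) Suc.prems(3,4) 3(2)] by blast
    then have "Q \<noteq> R"
      using collinear3_refl by metis
    then have "card (T - {Q, R}) \<le> 2 * m"
      using QR(1,2) Suc.prems(1,3) by (simp add: card_Diff_subset)
    moreover obtain \<alpha> \<beta> \<gamma> where "\<alpha> * fst Q + \<beta> * snd Q + \<gamma> = 0" "\<alpha> * fst R + \<beta> * snd R + \<gamma> = 0"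
        "\<alpha> * fst P + \<beta> * snd P + \<gamma> \<noteq> 0"
      using affine_form_through_two_points QR(3) by metis
    ultimately show ?thesis
      using QR(4) by (intro extend[of "T - {Q, R}" \<alpha> \<beta> \<gamma>]) auto
  qed
qed

lemma poly_fun_separating_point:
  fixes S :: "('a::field \<times> 'a) set"
  assumes "finite S" "P \<in> S" "card S \<le> 2 * m + 1"
    and "\<forall>S' \<subseteq> S. collinear_pts S' \<longrightarrow> card S' \<le> m"
  obtains f where "poly_fun m f" "\<forall>Q \<in> S - {P}. f Q = 0" "f P \<noteq> 0"
proof -
  have "card (pts_on_line P Q (S - {P})) \<le> m" if "Q \<in> S - {P}" for Q
  proof -
    have "insert P (pts_on_line P Q (S - {P})) \<subseteq> S"
      using assms(2) by (auto simp: pts_on_line_def)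
    moreover have "collinear_pts (insert P (pts_on_line P Q (S - {P})))"
      using that by (intro collinear_pts_on_line) simp
    ultimately have "card (insert P (pts_on_line P Q (S - {P}))) \<le> m"
      using assms(4) by blast
    moreover have "card (pts_on_line P Q (S - {P})) \<le> card (insert P (pts_on_line P Q (S - {P})))"
      using assms(1) by (intro card_mono) (auto simp: pts_on_line_def)
    ultimately show ?thesis
      by linarith
  qed
  moreover have "card (S - {P}) \<le> 2 * m"
    using assms(1-3) by simp
  ultimately show ?thesis
    using poly_fun_vanishing_avoiding_point[of "S - {P}" P m] assms(1) that by auto
qed

lemma herm_dual_code_orthogonal_poly_fun:
  fixes c :: "'a::field \<times> 'a \<Rightarrow> 'a"
  assumes "c \<in> herm_dual_code q \<rho>"
    and "herm_LG_code q \<rho> = (herm_poly_code q m :: ('a \<times> 'a \<Rightarrow> 'a) set)" "poly_fun m f"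
  shows "(\<Sum>X\<in>herm_pts q. c X * f X) = 0"
proof -
  define v where "v X = (if X \<in> herm_pts q then f X else 0)" for X
  have "v \<in> herm_poly_code q m"
    using assms(3) by (auto simp: herm_poly_code_def herm_word_def poly_fun_def v_def)
  with assms(1,2) have "(\<Sum>X\<in>herm_pts q. c X * v X) = 0"
    by (simp add: herm_dual_code_def)
  moreover have "(\<Sum>X\<in>herm_pts q. c X * v X) = (\<Sum>X\<in>herm_pts q. c X * f X)"
    by (rule sum.cong) (simp_all add: v_def)
  ultimately show ?thesis
    by simp
qed

theorem proposition1:
  fixes q \<rho> d a :: nat and c :: "'a::{finite, field} \<times> 'a \<Rightarrow> 'a"
  assumes "\<exists>p k. prime p \<and> k > 0 \<and> q = p ^ k"
    and "card (UNIV :: 'a set) = q ^ 2"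
    and "\<rho> \<le> q ^ 2 - q - 2"
    and "d = herm_min_dist q \<rho> TYPE('a)"
    and "herm_LG_code q \<rho> = (herm_poly_code q (d - 2) :: ('a \<times> 'a \<Rightarrow> 'a) set)"
    and "a + 3 \<le> d"
    and "c \<in> herm_dual_code q \<rho>"
    and "herm_weight q c = d + a"
  shows "\<exists>S \<subseteq> {P \<in> herm_pts q. c P \<noteq> 0}. card S \<ge> d - 1 \<and> collinear_pts S"
proof (rule ccontr)
  define supp where "supp = {P \<in> herm_pts q. c P \<noteq> 0}"
  assume no_large_line: "\<not> ?thesis"
  have no_line: "\<forall>S \<subseteq> supp. collinear_pts S \<longrightarrow> card S \<le> d - 2"
  proof (intro allI impI)
    fix S assume "S \<subseteq> supp" "collinear_pts S"
    then have "\<not> d - 1 \<le> card S"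
      using no_large_line unfolding supp_def by blast
    then show "card S \<le> d - 2"
      by arith
  qed
  have card_supp: "card supp = d + a"
    using assms(8) by (simp add: herm_weight_def supp_def)
  then have "supp \<noteq> {}"
    using assms(6) by auto
  then obtain P where P: "P \<in> supp"
    by blast
  moreover have "card supp \<le> 2 * (d - 2) + 1"
    using card_supp assms(6) by arith
  ultimately obtain f where f: "poly_fun (d - 2) f" "\<forall>Q \<in> supp - {P}. f Q = 0" "f P \<noteq> 0"
    using poly_fun_separating_point[of supp P "d - 2"] no_line by auto
  have "(\<Sum>X\<in>herm_pts q. c X * f X) = 0"
    using herm_dual_code_orthogonal_poly_fun[OF assms(7,5) f(1)] .
  moreover have "(\<Sum>X\<in>herm_pts q. c X * f X) = (\<Sum>X\<in>{P}. c X * f X)"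
    using P f(2) by (intro sum.mono_neutral_right) (auto simp: supp_def)
  ultimately show False
    using P f(3) by (simp add: supp_def)
qed

end
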